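(* For a chemical reaction network satisfying (H1) and (H2): (1) the constant monomial does not appear in any derivative $x^{(\ell)}$, $\ell\ge1$, of any species $X$; (2) if $X$ is a non-intermediate species and $\ell\ge1$, every monomial of degree 1 appearing in $x^{(\ell)}$ is of the form $w$ for an intermediate species $W\in\mathscr{W}_X$, i.e., the only degree-one monomials of $x^{(\ell)}$ are among those appearing in $\dot x$.
   Context: Species are capital letters, concentrations lower-case letters. A reaction network has reactions $y\to y'$ between complexes with rate constants $k_{yy'}>0$ (vector $\mathbf{k}$); mass-action system $\dot{\mathbf{x}}=\sum k_{yy'}\mathbf{x}^y(y'-y)$. Total derivative of a polynomial: $\dot\varphi=\sum_i\frac{\partial\varphi}{\partial x_i}\dot x_i$ with $\dot x_i$ replaced by the right-hand side; $\varphi^{(\ell)}$ its $\ell$-th iterate, a polynomial in the concentration variables with coefficients polynomial in $\mathbf{k}$. A monomial "appears in" $\varphi^{(\ell)}$ if its coefficient is a nonzero polynomial in $\mathbf{k}$. (H1) Every connected component has the form $Y+S_0\rightleftarrows U_1\to Y+S_1\rightleftarrows\cdots\rightleftarrows U_L\to Y+S_L$ (reactions $Y+S_{j-1}\to U_j$, $U_j\to Y+S_{j-1}$, $U_j\to Y+S_j$), unique enzyme $Y$; intermediate species ($U_j$) distinct throughout the network; non-intermediates of a component pairwise distinct but may appear in other components; each complex in a unique component. $\mathscr{S}_U$ = substrates/products of the component of intermediate $U$. (H2) A partition $\mathscr{S}^{(0)}\sqcup\cdots\sqcup\mathscr{S}^{(M)}$ ($M\ge2$, nonempty, $\mathscr{S}^{(0)}$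 the intermediates) with: for each intermediate $U$ with enzyme $Y$, some $\alpha\ge1$ has $\mathscr{S}_U\subseteq\mathscr{S}^{(\alpha)}$, $Y\notin\mathscr{S}^{(\alpha)}$. An intermediate $U$ reacts to a non-intermediate $X_1$ if there is a reaction $U\to X_1+X_2$ with $X_2$ non-intermediate. $\mathscr{W}_X$ = set of intermediates that react to $X$. *)

theory Defs
  imports "HOL-Library.Poly_Mapping"
begin

text \<open>A reaction is a pair (y, y') of complexes; it is also the index of its rate
constant.  The rate constants are polynomial variables, so coefficients
live in the integer polynomial ring in the rate-constant variables.\<close>

type_synonym 's cplx = "'s \<Rightarrow>\<^sub>0 nat"
type_synonym 's rxn = "'s cplx \<times> 's cplx"
type_synonym 's kpoly = "('s rxn \<Rightarrow>\<^sub>0 nat) \<Rightarrow>\<^sub>0 int"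
type_synonym 's xpoly = "('s \<Rightarrow>\<^sub>0 nat) \<Rightarrow>\<^sub>0 's kpoly"
  \<comment> \<open>polynomials in the concentrations, coefficients polynomial in k\<close>

definition xvar :: "'s \<Rightarrow> 's xpoly" where
  "xvar X = Poly_Mapping.single (Poly_Mapping.single X 1) 1"

definition pdiff :: "'s \<Rightarrow> 's xpoly \<Rightarrow> 's xpoly" where
  "pdiff i p = (\<Sum>m\<in>Poly_Mapping.keys p. Poly_Mapping.single (m - Poly_Mapping.single i 1)
                   (Poly_Mapping.lookup p m * of_nat (Poly_Mapping.lookup m i)))"

text \<open>Mass-action right-hand side for species i:
  sum over reactions y -> y' of k_{yy'} x^y (y'_i - y_i).\<close>
definition rhs :: "'s rxn set \<Rightarrow> 's \<Rightarrow> 's xpoly" where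
  "rhs R i = (\<Sum>r\<in>R. Poly_Mapping.single (fst r)
       (Poly_Mapping.single (Poly_Mapping.single r 1)
          (int (Poly_Mapping.lookup (snd r) i) - int (Poly_Mapping.lookup (fst r) i))))"

definition tdiff :: "'s set \<Rightarrow> 's rxn set \<Rightarrow> 's xpoly \<Rightarrow> 's xpoly" where
  "tdiff S R p = (\<Sum>i\<in>S. pdiff i p * rhs R i)"

definition appears :: "('s \<Rightarrow>\<^sub>0 nat) \<Rightarrow> 's xpoly \<Rightarrow> bool" where
  "appears \<mu> p \<longleftrightarrow> Poly_Mapping.lookup p \<mu> \<noteq> 0"

definition mdeg :: "('s \<Rightarrow>\<^sub>0 nat) \<Rightarrow> nat" where
  "mdeg \<mu> = (\<Sum>s\<in>Poly_Mapping.keys \<mu>. Poly_Mapping.lookup \<mu> s)"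

text \<open>A component is (Y, [S_0,...,S_L], [U_1,...,U_L]).\<close>
type_synonym 's comp = "'s \<times> 's list \<times> 's list"

definition sp :: "'s \<Rightarrow> 's cplx" where "sp X = Poly_Mapping.single X 1"

definition comp_reactions :: "'s comp \<Rightarrow> 's rxn set" where
  "comp_reactions c = (case c of (Y, Ss, Us) \<Rightarrow>
     (\<Union>j<length Us.
        {(sp Y + sp (Ss!j), sp (Us!j)), (sp (Us!j), sp Y + sp (Ss!j)),
         (sp (Us!j), sp Y + sp (Ss!Suc j))}))"

definition comp_complexes :: "'s comp \<Rightarrow> 's cplx set" where
  "comp_complexes c = (case c of (Y, Ss, Us) \<Rightarrow>
     {sp Y + sp (Ss!j) | j. j < length Ss} \<union> {sp (Us!j) | j. j < length Us})"

definition comp_enz :: "'s comp \<Rightarrow> 's" where "comp_enz c = fst c"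
definition comp_subs :: "'s comp \<Rightarrow> 's list" where "comp_subs c = fst (snd c)"
definition comp_ints :: "'s comp \<Rightarrow> 's list" where "comp_ints c = snd (snd c)"

definition intermediates :: "'s comp set \<Rightarrow> 's set" where
  "intermediates CC = (\<Union>c\<in>CC. set (comp_ints c))"

definition nonintermediates :: "'s comp set \<Rightarrow> 's set" where
  "nonintermediates CC = (\<Union>c\<in>CC. insert (comp_enz c) (set (comp_subs c)))"

definition net_species :: "'s comp set \<Rightarrow> 's set" where
  "net_species CC = intermediates CC \<union> nonintermediates CC"

definition H1 :: "'s rxn set \<Rightarrow> 's comp set \<Rightarrow> bool" where
  "H1 R CC \<longleftrightarrow>
     finite CC \<and> R = (\<Union>c\<in>CC. comp_reactions c) \<and>
     (\<forall>c\<in>CC. length (comp_ints c) \<ge> 1 \<and>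
              length (comp_subs c) = Suc (length (comp_ints c)) \<and>
              distinct (comp_enz c # comp_subs c) \<and>
              distinct (comp_ints c)) \<and>
     (\<forall>c\<in>CC. \<forall>c'\<in>CC. c \<noteq> c' \<longrightarrow> set (comp_ints c) \<inter> set (comp_ints c') = {}) \<and>
     intermediates CC \<inter> nonintermediates CC = {} \<and>
     (\<forall>c\<in>CC. \<forall>c'\<in>CC. c \<noteq> c' \<longrightarrow> comp_complexes c \<inter> comp_complexes c' = {})"

text \<open>Partition S^(0),...,S^(M) given as a function P on indices 0..M.\<close>
definition H2 :: "'s comp set \<Rightarrow> nat \<Rightarrow> (nat \<Rightarrow> 's set) \<Rightarrow> bool" where
  "H2 CC M P \<longleftrightarrow>
     M \<ge> 2 \<and>
     (\<forall>\<alpha>\<le>M. P \<alpha> \<noteq> {}) \<and>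
     (\<forall>\<alpha>\<le>M. \<forall>\<beta>\<le>M. \<alpha> \<noteq> \<beta> \<longrightarrow> P \<alpha> \<inter> P \<beta> = {}) \<and>
     (\<Union>\<alpha>\<le>M. P \<alpha>) = net_species CC \<and>
     P 0 = intermediates CC \<and>
     (\<forall>c\<in>CC. \<forall>U\<in>set (comp_ints c). \<exists>\<alpha>. 1 \<le> \<alpha> \<and> \<alpha> \<le> M \<and>
          set (comp_subs c) \<subseteq> P \<alpha> \<and> comp_enz c \<notin> P \<alpha>)"

definition W_set :: "'s rxn set \<Rightarrow> 's comp set \<Rightarrow> 's \<Rightarrow> 's set" where
  "W_set R CC X = {U \<in> intermediates CC. \<exists>X2 \<in> nonintermediates CC.
                     (sp U, sp X + sp X2) \<in> R}"

end

theory Submission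
  imports Defs
begin

text \<open>Under (H1) every reaction joins a single intermediate U with a complex Y + S of two
distinct non-intermediates.  Each term of a total derivative carries the factor x^y of a reactant
complex y \<noteq> 0, so the constant monomial never appears.  A degree-one monomial w of the total
derivative of p can only arise from a degree-one monomial x_i of p and a reaction W \<rightarrow> Y + S
changing the amount of species i: if i is an intermediate this forces i = W, and if i = X is a
non-intermediate it forces W \<in> W_X.  Induction on the order of the derivative gives the claim.\<close>

lemma lookup_sp [simp]: "Poly_Mapping.lookup (sp a) b = (if a = b then 1 else 0)"
  by (simp add: sp_def lookup_single when_def)

lemma sp_eq_iff: "sp a = sp b \<longleftrightarrow> a = b"
  by (metis lookup_sp one_neq_zero)

lemma sp_neq_zero: "sp a \<noteq> 0"
  by (metis lookup_sp lookup_zero one_neq_zero)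

lemma poly_mapping_nat_add_eq_zero: "m1 + m2 = (0 :: 'a \<Rightarrow>\<^sub>0 nat) \<Longrightarrow> m2 = 0"
  by (metis add_is_0 lookup_add lookup_zero poly_mapping_eqI)

lemma add_eq_sp:
  assumes "m1 + m2 = sp a" "m2 \<noteq> 0"
  shows "m1 = 0 \<and> m2 = sp a"
proof -
  have l: "\<And>b. Poly_Mapping.lookup m1 b + Poly_Mapping.lookup m2 b = (if a = b then 1 else 0)"
    by (metis assms(1) lookup_add lookup_sp)
  obtain b where b: "Poly_Mapping.lookup m2 b \<noteq> 0"
    using assms(2) poly_mapping_eqI lookup_zero by metis
  then have "b = a" using l[of b] by (auto split: if_splits)
  then have "m1 = 0"
  proof (intro poly_mapping_eqI)
    fix k show "Poly_Mapping.lookup m1 k = Poly_Mapping.lookup 0 k"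
      using l[of k] l[of a] b \<open>b = a\<close> by (cases "k = a") auto
  qed
  with assms(1) show ?thesis by simp
qed

lemma diff_sp_eq_zero:
  assumes "m - sp i = 0" "Poly_Mapping.lookup m i \<noteq> 0"
  shows "m = sp i"
proof (rule poly_mapping_eqI)
  fix b
  have "Poly_Mapping.lookup m b - Poly_Mapping.lookup (sp i) b = 0"
    by (metis assms(1) lookup_minus lookup_zero)
  then show "Poly_Mapping.lookup m b = Poly_Mapping.lookup (sp i) b"
    using assms(2) by auto
qed

lemma sp_add_sp_neq_sp:
  assumes "Y \<noteq> S"
  shows "sp Y + sp S \<noteq> sp a"
  by (metis add.commute assms add_eq_sp sp_eq_iff sp_neq_zero)

lemma mdeg_eq_1_iff: "mdeg \<mu> = 1 \<longleftrightarrow> (\<exists>a. \<mu> = sp a)"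
proof
  assume deg: "mdeg \<mu> = 1"
  then obtain a where a: "a \<in> Poly_Mapping.keys \<mu>" by (fastforce simp: mdeg_def)
  have pos: "Poly_Mapping.lookup \<mu> a \<ge> 1"
    using a by (simp add: in_keys_iff)
  have split: "mdeg \<mu> = Poly_Mapping.lookup \<mu> a + (\<Sum>s\<in>Poly_Mapping.keys \<mu> - {a}. Poly_Mapping.lookup \<mu> s)"
    unfolding mdeg_def using a by (simp add: sum.remove)
  have "Poly_Mapping.lookup \<mu> a = 1"
    and "(\<Sum>s\<in>Poly_Mapping.keys \<mu> - {a}. Poly_Mapping.lookup \<mu> s) = 0"
    using split deg pos by linarith+
  then have "\<mu> = sp a"
    by (intro poly_mapping_eqI) (auto simp: in_keys_iff sum_eq_0_iff)
  then show "\<exists>a. \<mu> = sp a" ..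
qed (auto simp: mdeg_def sp_def)

lemma appears_iff_in_keys: "appears \<mu> p \<longleftrightarrow> \<mu> \<in> Poly_Mapping.keys p"
  by (simp add: appears_def in_keys_iff)

lemma keys_xvar: "Poly_Mapping.keys (xvar X) = {sp X}"
  by (simp add: xvar_def sp_def)

lemma keys_pdiff:
  assumes "m \<in> Poly_Mapping.keys (pdiff i p)"
  shows "\<exists>m'\<in>Poly_Mapping.keys p. Poly_Mapping.lookup m' i \<noteq> 0 \<and> m = m' - sp i"
proof -
  from subsetD[OF keys_sum assms[unfolded pdiff_def]] obtain m' where "m' \<in> Poly_Mapping.keys p"
    "m \<in> Poly_Mapping.keys (Poly_Mapping.single (m' - Poly_Mapping.single i 1)
            (Poly_Mapping.lookup p m' * of_nat (Poly_Mapping.lookup m' i)))"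
    by blast
  then show ?thesis
    by (cases "Poly_Mapping.lookup m' i = 0") (auto simp: sp_def split: if_splits)
qed

lemma keys_rhs:
  assumes "m \<in> Poly_Mapping.keys (rhs R i)"
  shows "\<exists>r\<in>R. m = fst r \<and> Poly_Mapping.lookup (snd r) i \<noteq> Poly_Mapping.lookup (fst r) i"
proof -
  from subsetD[OF keys_sum assms[unfolded rhs_def]] obtain r where "r \<in> R"
    "m \<in> Poly_Mapping.keys (Poly_Mapping.single (fst r) (Poly_Mapping.single (Poly_Mapping.single r (1::nat))
            (int (Poly_Mapping.lookup (snd r) i) - int (Poly_Mapping.lookup (fst r) i))))"
    by blast
  then show ?thesis
    by (cases "Poly_Mapping.lookup (snd r) i = Poly_Mapping.lookup (fst r) i") (auto split: if_splits)
qed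

lemma keys_tdiff:
  assumes "m \<in> Poly_Mapping.keys (tdiff S R p)"
  shows "\<exists>i\<in>S. \<exists>m1 m2. m = m1 + m2 \<and> m1 \<in> Poly_Mapping.keys (pdiff i p) \<and>
                        m2 \<in> Poly_Mapping.keys (rhs R i)"
  using subsetD[OF keys_sum assms[unfolded tdiff_def]] keys_mult by blast

lemma H1_intermediates_disjoint:
  "H1 R CC \<Longrightarrow> intermediates CC \<inter> nonintermediates CC = {}"
  by (simp add: H1_def)

lemma W_set_subset_intermediates: "W_set R CC X \<subseteq> intermediates CC"
  by (auto simp: W_set_def)

lemma H1_reactionE:
  assumes "H1 R CC" "r \<in> R"
  obtains U Y S where "U \<in> intermediates CC" "Y \<in> nonintermediates CC" "S \<in> nonintermediates CC"
    "Y \<noteq> S" "r = (sp Y + sp S, sp U) \<or> r = (sp U, sp Y + sp S)"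
proof -
  from assms obtain c where c: "c \<in> CC" "r \<in> comp_reactions c"
    by (auto simp: H1_def)
  obtain Y Ss Us where cc: "c = (Y, Ss, Us)" by (cases c)
  from assms(1) c(1) cc have len: "length Ss = Suc (length Us)" and dist: "distinct (Y # Ss)"
    by (auto simp: H1_def comp_subs_def comp_ints_def comp_enz_def)
  from c(2) cc obtain j where j: "j < length Us" and
    r: "r = (sp Y + sp (Ss!j), sp (Us!j)) \<or> r = (sp (Us!j), sp Y + sp (Ss!j)) \<or>
        r = (sp (Us!j), sp Y + sp (Ss!Suc j))"
    unfolding comp_reactions_def by auto
  have U: "Us!j \<in> intermediates CC"
    using c(1) cc j unfolding intermediates_def comp_ints_def by force
  have Y: "Y \<in> nonintermediates CC"
    using c(1) cc unfolding nonintermediates_def comp_enz_def by force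
  have S: "Ss!k \<in> nonintermediates CC" "Y \<noteq> Ss!k" if "k \<le> Suc j" for k
    using c(1) cc that j len dist unfolding nonintermediates_def comp_subs_def by force+
  from r show thesis
    using that[OF U Y S(1)[of j] S(2)[of j]] that[OF U Y S(1)[of "Suc j"] S(2)[of "Suc j"]]
    by auto
qed

lemma H1_reactant_nonzero:
  assumes "H1 R CC" "(y, y') \<in> R"
  shows "y \<noteq> 0"
  using assms by (elim H1_reactionE) (auto dest!: poly_mapping_nat_add_eq_zero simp: sp_neq_zero)

lemma H1_reaction_from_species:
  assumes "H1 R CC" "(sp a, y') \<in> R"
  shows "a \<in> intermediates CC \<and>
         (\<exists>Y S. y' = sp Y + sp S \<and> Y \<in> nonintermediates CC \<and> S \<in> nonintermediates CC)"
  using assms by (elim H1_reactionE) (auto simp: sp_eq_iff sp_add_sp_neq_sp[THEN not_sym])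

lemma H1_constant_not_in_keys_tdiff:
  assumes "H1 R CC"
  shows "0 \<notin> Poly_Mapping.keys (tdiff S R p)"
proof
  assume "0 \<in> Poly_Mapping.keys (tdiff S R p)"
  then obtain i m1 m2 where "0 = m1 + m2" "m2 \<in> Poly_Mapping.keys (rhs R i)"
    by (blast dest: keys_tdiff)
  then obtain r where "r \<in> R" "fst r = 0"
    by (metis poly_mapping_nat_add_eq_zero keys_rhs)
  with H1_reactant_nonzero[OF assms] show False
    by (metis prod.collapse)
qed

lemma H1_linear_key_tdiff:
  assumes "H1 R CC" "sp a \<in> Poly_Mapping.keys (tdiff S R p)"
  obtains i where "sp i \<in> Poly_Mapping.keys p"
    "i \<in> intermediates CC \<Longrightarrow> i = a"
    "i \<in> nonintermediates CC \<Longrightarrow> a \<in> W_set R CC i"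
proof -
  from keys_tdiff[OF assms(2)] obtain i m1 m2 where m: "sp a = m1 + m2"
    "m1 \<in> Poly_Mapping.keys (pdiff i p)" "m2 \<in> Poly_Mapping.keys (rhs R i)"
    by blast
  from keys_rhs[OF m(3)] obtain y y' where r: "(y, y') \<in> R" "m2 = y"
    and changes: "Poly_Mapping.lookup y' i \<noteq> Poly_Mapping.lookup y i"
    by auto
  from m(1) r H1_reactant_nonzero[OF assms(1)] have "m1 = 0" "y = sp a"
    using add_eq_sp by metis+
  from keys_pdiff[OF m(2)] \<open>m1 = 0\<close> have i: "sp i \<in> Poly_Mapping.keys p"
    using diff_sp_eq_zero by (metis in_keys_iff)
  from H1_reaction_from_species[OF assms(1)] r \<open>y = sp a\<close> obtain Y S where
    a: "a \<in> intermediates CC" and y': "y' = sp Y + sp S"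
    and YS: "Y \<in> nonintermediates CC" "S \<in> nonintermediates CC"
    by blast
  note disjoint = H1_intermediates_disjoint[OF assms(1)]
  show thesis
  proof (rule that[OF i])
    assume "i \<in> intermediates CC"
    with disjoint YS have "Poly_Mapping.lookup y' i = 0"
      by (auto simp: y' lookup_add)
    with changes \<open>y = sp a\<close> show "i = a"
      by (auto split: if_splits)
  next
    assume "i \<in> nonintermediates CC"
    with disjoint a changes \<open>y = sp a\<close> have "i = Y \<or> i = S"
      by (auto simp: y' lookup_add split: if_splits)
    with r \<open>y = sp a\<close> y' have "(sp a, sp i + sp S) \<in> R \<or> (sp a, sp i + sp Y) \<in> R"
      by (auto simp: add.commute)
    with a YS show "a \<in> W_set R CC i"
      unfolding W_set_def by blast
  qed
qed

lemma H1_linear_keys_funpow_tdiff: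
  assumes "H1 R CC" "X \<in> nonintermediates CC"
    and "sp a \<in> Poly_Mapping.keys ((tdiff S R ^^ Suc k) (xvar X))"
  shows "a \<in> W_set R CC X"
  using assms(3)
proof (induction k arbitrary: a)
  case 0
  then show ?case
    using assms(2) by (auto simp: keys_xvar sp_eq_iff elim: H1_linear_key_tdiff[OF assms(1)])
next
  case (Suc k)
  obtain i where "sp i \<in> Poly_Mapping.keys ((tdiff S R ^^ Suc k) (xvar X))"
    and "i \<in> intermediates CC \<Longrightarrow> i = a"
    using H1_linear_key_tdiff[OF assms(1), where p = "(tdiff S R ^^ Suc k) (xvar X)"] Suc.prems
    by (simp only: funpow.simps(2) o_apply) blast
  moreover from this(1) have "i \<in> W_set R CC X" by (rule Suc.IH)
  ultimately show ?case
    using W_set_subset_intermediates by fastforce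
qed

theorem mainTheorem6:
  fixes R :: "'s rxn set" and CC :: "'s comp set" and M :: nat and P :: "nat \<Rightarrow> 's set"
  assumes "H1 R CC" and "H2 CC M P"
  shows "(\<forall>X\<in>net_species CC. \<forall>l::nat\<ge>1.
            \<not> appears 0 ((tdiff (net_species CC) R ^^ l) (xvar X)))
       \<and> (\<forall>X\<in>nonintermediates CC. \<forall>l::nat\<ge>1. \<forall>\<mu>.
            mdeg \<mu> = 1 \<and> appears \<mu> ((tdiff (net_species CC) R ^^ l) (xvar X))
            \<longrightarrow> (\<exists>W\<in>W_set R CC X. \<mu> = sp W))"
proof -
  let ?f = "tdiff (net_species CC) R"
  have Suc_pred: "l = Suc (l - 1)" if "l \<ge> 1" for l :: nat
    using that by simp
  show ?thesis
  proof (intro conjI ballI allI impI)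
    fix X and l :: nat
    assume "l \<ge> 1"
    then show "\<not> appears 0 ((?f ^^ l) (xvar X))"
      using H1_constant_not_in_keys_tdiff[OF assms(1)] Suc_pred
      by (metis appears_iff_in_keys comp_apply funpow.simps(2))
  next
    fix X and l :: nat and \<mu>
    assume "X \<in> nonintermediates CC" "l \<ge> 1"
      and "mdeg \<mu> = 1 \<and> appears \<mu> ((?f ^^ l) (xvar X))"
    then show "\<exists>W\<in>W_set R CC X. \<mu> = sp W"
      using H1_linear_keys_funpow_tdiff[OF assms(1)] Suc_pred
      by (metis appears_iff_in_keys mdeg_eq_1_iff)
  qed
qed

end
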